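(* Under the model described in the context, for all $s\ge0$, \[ \int_0^\infty\!\!\int_0^\infty \left(1-e^{-sPhG(t)}\right) q(h)\,p(t)\,dh\,dt<\infty . \]
   Context: Let $\lambda>0$, $\alpha>2$. Transmitter locations form a Poisson point process on $\mathbb R^2$ with locally finite mean measure $\Lambda$ and $\Lambda(\mathbb R^2)=\infty$. A test receiver is at a fixed point $\mathbf X_o$, $T(\mathbf x)=\|\mathbf x-\mathbf X_o\|_2$, and $\Lambda(\{\mathbf x: T(\mathbf x)\in A\})=\lambda\int_A p(t)\,dt$ for all Borel $A\subseteq[0,\infty)$, where $p\ge0$ satisfies $p(t)=O(t^{\alpha-1-\epsilon})$ as $t\to\infty$ for some $\epsilon>0$. The path-loss function $G:[0,\infty)\to[0,\infty)$ is bounded, monotone non-increasing, with $G(t)=O(t^{-\alpha})$ as $t\to\infty$. $q$ is a probability density on $[0,\infty)$ with finite first, second and third moments. $P>0$. *)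

theory Defs
  imports "HOL-Analysis.Analysis" "HOL-Library.Landau_Symbols"
begin

end

theory Submission
  imports Defs
begin

text \<open>Since \<open>1 - e\<^sup>-\<^sup>x \<le> x\<close>, the inner integral is at most \<open>s P G(t) p(t) E[h]\<close>, so it suffices
  that \<open>G p\<close> is integrable on \<open>[0, \<infinity>)\<close>. On a bounded interval \<open>G\<close> is bounded and \<open>p\<close> is
  integrable because \<open>\<Lambda>\<close> is finite on compact discs; near infinity
  \<open>G(t) p(t) = O(t\<^sup>-\<^sup>1\<^sup>-\<^sup>\<epsilon>)\<close>, which is integrable.\<close>

lemma nn_integral_one_minus_exp_le_first_moment:
  fixes q :: "real \<Rightarrow> real" and a c m :: real
  assumes "a \<ge> 0" "c \<ge> 0" "m \<ge> 0"
    and q_nonneg: "\<And>h. h \<ge> 0 \<Longrightarrow> q h \<ge> 0"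
    and q_meas: "q \<in> borel_measurable borel"
    and moment: "(\<integral>\<^sup>+ h\<in>{0..}. ennreal (h * q h) \<partial>lborel) = ennreal m"
  shows "(\<integral>\<^sup>+ h\<in>{0..}. ennreal ((1 - exp (- a * h)) * q h * c) \<partial>lborel) \<le> ennreal (a * m * c)"
proof -
  have "(\<integral>\<^sup>+ h\<in>{0..}. ennreal ((1 - exp (- a * h)) * q h * c) \<partial>lborel)
      \<le> (\<integral>\<^sup>+ h. ennreal (a * c) * (ennreal (h * q h) * indicator {0..} h) \<partial>lborel)"
  proof (intro nn_integral_mono)
    fix h :: real
    show "ennreal ((1 - exp (- a * h)) * q h * c) * indicator {0..} h
        \<le> ennreal (a * c) * (ennreal (h * q h) * indicator {0..} h)"
    proof (cases "h \<ge> 0")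
      case True
      have "1 - exp (- (a * h)) \<le> a * h"
        using exp_ge_add_one_self[of "- (a * h)"] by simp
      then have "(1 - exp (- a * h)) * q h * c \<le> (a * h) * q h * c"
        using q_nonneg[OF True] \<open>c \<ge> 0\<close> by (simp add: mult_right_mono)
      then have "(1 - exp (- a * h)) * q h * c \<le> (a * c) * (h * q h)"
        by (simp add: mult_ac)
      then have "ennreal ((1 - exp (- a * h)) * q h * c) \<le> ennreal (a * c) * ennreal (h * q h)"
        using assms(1,2) by (simp add: ennreal_leI flip: ennreal_mult')
      then show ?thesis using True by simp
    qed simp
  qed
  also have "\<dots> = ennreal (a * c) * (\<integral>\<^sup>+ h\<in>{0..}. ennreal (h * q h) \<partial>lborel)"
    using q_meas by (intro nn_integral_cmult) simp
  also have "\<dots> = ennreal (a * c) * ennreal m"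
    by (simp only: moment)
  also have "\<dots> = ennreal (a * m * c)"
    using assms(1-3) by (simp add: ennreal_mult mult_ac)
  finally show ?thesis .
qed

lemma bigo_mult_powr:
  fixes f g :: "real \<Rightarrow> real"
  assumes "f \<in> O[at_top](\<lambda>t. t powr a)" "g \<in> O[at_top](\<lambda>t. t powr b)"
  shows "(\<lambda>t. f t * g t) \<in> O[at_top](\<lambda>t. t powr (a + b))"
proof -
  have "(\<lambda>t. f t * g t) \<in> O[at_top](\<lambda>t. t powr a * t powr b)"
    using assms by (rule landau_o.big_mult)
  also have "(\<lambda>t::real. t powr a * t powr b) \<in> O[at_top](\<lambda>t. t powr (a + b))"
    by (simp add: powr_add)
  finally show ?thesis .
qed

lemma nn_integral_radial_density_Icc_finite:
  fixes \<Lambda> :: "'a::{real_normed_vector, heine_borel} measure" and x0 :: 'a and p :: "real \<Rightarrow> real"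
  assumes lam_pos: "lam > 0"
    and locfin: "\<And>K. compact K \<Longrightarrow> emeasure \<Lambda> K < \<infinity>"
    and radial: "\<And>A. A \<in> sets borel \<Longrightarrow> A \<subseteq> {0..} \<Longrightarrow>
       emeasure \<Lambda> {x. norm (x - x0) \<in> A} = ennreal lam * (\<integral>\<^sup>+ t\<in>A. ennreal (p t) \<partial>lborel)"
  shows "(\<integral>\<^sup>+ t\<in>{0..R}. ennreal (p t) \<partial>lborel) < \<infinity>"
proof -
  have disc: "{x. norm (x - x0) \<in> {0..R}} = cball x0 R"
    by (auto simp: dist_norm norm_minus_commute)
  have "emeasure \<Lambda> (cball x0 R) < \<infinity>"
    by (rule locfin) simp
  then have "ennreal lam * (\<integral>\<^sup>+ t\<in>{0..R}. ennreal (p t) \<partial>lborel) < \<infinity>"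
    using radial[of "{0..R}", unfolded disc] by simp
  then show ?thesis
    using lam_pos by (auto simp: ennreal_mult_less_top)
qed

text \<open>The integrand \<open>f\<close> need not be measurable: it is only compared with the measurable
  majorant \<open>B g\<close> on \<open>[0, R]\<close> and \<open>C t\<^sup>e\<close> on \<open>[R, \<infinity>)\<close>.\<close>

lemma nn_integral_finite_if_local_majorant_and_powr_tail:
  fixes f g :: "real \<Rightarrow> real" and B e :: real
  assumes g_meas: "g \<in> borel_measurable borel"
    and g_local: "\<And>R. (\<integral>\<^sup>+ t\<in>{0..R}. ennreal (g t) \<partial>lborel) < \<infinity>"
    and f_le: "\<And>t. t \<ge> 0 \<Longrightarrow> f t \<le> B * g t"
    and B: "B \<ge> 0"
    and f_tail: "f \<in> O[at_top](\<lambda>t. t powr e)"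
    and e: "e < -1"
  shows "(\<integral>\<^sup>+ t\<in>{0..}. ennreal (f t) \<partial>lborel) < \<infinity>"
proof -
  note [measurable] = g_meas
  obtain C where C: "C > 0" "eventually (\<lambda>t. norm (f t) \<le> C * norm (t powr e)) at_top"
    using f_tail by (elim landau_o.bigE)
  then obtain R where R: "R \<ge> 1" "\<And>t. t \<ge> R \<Longrightarrow> f t \<le> C * t powr e"
    unfolding eventually_at_top_linorder
    by (metis abs_le_D1 abs_of_nonneg nle_le powr_ge_zero real_norm_def order.trans)
  define F where "F t = ennreal B * (ennreal (g t) * indicator {0..R} t)
      + ennreal C * (ennreal (t powr e) * indicator {R..} t)" for t
  have majorant: "ennreal (f t) * indicator {0..} t \<le> F t" for t
  proof (cases "t \<ge> 0")
    case t0: True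
    show ?thesis
    proof (cases "t \<le> R")
      case True
      then have "ennreal (f t) \<le> ennreal B * ennreal (g t)"
        using f_le[OF t0] B by (simp add: ennreal_leI ennreal_mult'[symmetric])
      then show ?thesis using True t0 unfolding F_def by (simp add: add_increasing2)
    next
      case False
      then have "ennreal (f t) \<le> ennreal C * ennreal (t powr e)"
        using R(2)[of t] C(1) by (simp add: ennreal_leI ennreal_mult[symmetric])
      then show ?thesis using False t0 unfolding F_def by (simp add: add_increasing)
    qed
  qed simp
  have powr_tail: "(\<integral>\<^sup>+ t\<in>{R..}. ennreal (t powr e) \<partial>lborel) = ennreal (- (R powr (e + 1)) / (e + 1))"
    using has_integral_powr_to_inf[OF e, of R] R(1)
    by (intro nn_integral_has_integral_lebesgue') auto
  have "(\<integral>\<^sup>+ t\<in>{0..}. ennreal (f t) \<partial>lborel) \<le> integral\<^sup>N lborel F"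
    by (intro nn_integral_mono majorant)
  also have "\<dots> = ennreal B * (\<integral>\<^sup>+ t\<in>{0..R}. ennreal (g t) \<partial>lborel)
      + ennreal C * (\<integral>\<^sup>+ t\<in>{R..}. ennreal (t powr e) \<partial>lborel)"
    unfolding F_def by (simp add: nn_integral_add nn_integral_cmult)
  also have "\<dots> < \<infinity>"
    using g_local[of R] by (simp add: powr_tail ennreal_mult_less_top)
  finally show ?thesis .
qed

theorem lemma1:
  fixes lam \<alpha> \<epsilon> P :: real
    and \<Lambda> :: "(real^2) measure"
    and Xo :: "real^2"
    and p q G :: "real \<Rightarrow> real"
  assumes lam_pos: "lam > 0"
    and alpha_gt: "\<alpha> > 2"
    and P_pos: "P > 0"
    and eps_pos: "\<epsilon> > 0"
    and Lambda_sets: "sets \<Lambda> = sets borel"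
    and Lambda_locfin: "\<And>K. compact K \<Longrightarrow> emeasure \<Lambda> K < \<infinity>"
    and Lambda_inf: "emeasure \<Lambda> UNIV = \<infinity>"
    and p_meas: "p \<in> borel_measurable borel"
    and p_nonneg: "\<And>t. t \<ge> 0 \<Longrightarrow> p t \<ge> 0"
    and Lambda_p: "\<And>A. A \<in> sets borel \<Longrightarrow> A \<subseteq> {0..} \<Longrightarrow>
         emeasure \<Lambda> {x. norm (x - Xo) \<in> A} = ennreal lam * (\<integral>\<^sup>+ t\<in>A. ennreal (p t) \<partial>lborel)"
    and p_growth: "p \<in> O[at_top](\<lambda>t. t powr (\<alpha> - 1 - \<epsilon>))"
    and G_nonneg: "\<And>t. t \<ge> 0 \<Longrightarrow> G t \<ge> 0"
    and G_bounded: "bounded (G ` {0..})"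
    and G_mono: "\<And>x y. 0 \<le> x \<Longrightarrow> x \<le> y \<Longrightarrow> G y \<le> G x"
    and G_decay: "G \<in> O[at_top](\<lambda>t. t powr (- \<alpha>))"
    and q_meas: "q \<in> borel_measurable borel"
    and q_nonneg: "\<And>h. h \<ge> 0 \<Longrightarrow> q h \<ge> 0"
    and q_density: "(\<integral>\<^sup>+ h\<in>{0..}. ennreal (q h) \<partial>lborel) = 1"
    and q_moments: "\<And>k::nat. k \<in> {1,2,3} \<Longrightarrow>
         (\<integral>\<^sup>+ h\<in>{0..}. ennreal (h ^ k * q h) \<partial>lborel) < \<infinity>"
  shows "\<forall>s\<ge>0. (\<integral>\<^sup>+ t\<in>{0..}. (\<integral>\<^sup>+ h\<in>{0..}.
            ennreal ((1 - exp (- s * P * h * G t)) * q h * p t) \<partial>lborel) \<partial>lborel) < \<infinity>"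
proof (intro allI impI)
  fix s :: real assume s0: "s \<ge> 0"
  define m where "m = enn2real (\<integral>\<^sup>+ h\<in>{0..}. ennreal (h * q h) \<partial>lborel)"
  have moment: "(\<integral>\<^sup>+ h\<in>{0..}. ennreal (h * q h) \<partial>lborel) = ennreal m"
    using q_moments[of 1] unfolding m_def by (simp add: less_top)
  obtain B where B: "\<And>t. t \<ge> 0 \<Longrightarrow> G t \<le> B"
    using G_bounded unfolding bounded_iff by (metis abs_le_D1 atLeast_iff image_eqI real_norm_def)
  define f where "f t = s * P * m * (G t * p t)" for t
  have inner: "(\<integral>\<^sup>+ h\<in>{0..}. ennreal ((1 - exp (- s * P * h * G t)) * q h * p t) \<partial>lborel)
      \<le> ennreal (f t)" if "t \<ge> 0" for t
  proof -
    have "(\<integral>\<^sup>+ h\<in>{0..}. ennreal ((1 - exp (- s * P * h * G t)) * q h * p t) \<partial>lborel)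
        = (\<integral>\<^sup>+ h\<in>{0..}. ennreal ((1 - exp (- (s * P * G t) * h)) * q h * p t) \<partial>lborel)"
      by (simp add: mult_ac)
    also have "\<dots> \<le> ennreal (s * P * G t * m * p t)"
      using s0 P_pos G_nonneg[OF that] p_nonneg[OF that]
      by (intro nn_integral_one_minus_exp_le_first_moment q_nonneg q_meas moment) (auto simp: m_def)
    finally show ?thesis
      by (simp add: f_def mult_ac)
  qed
  have f_finite: "(\<integral>\<^sup>+ t\<in>{0..}. ennreal (f t) \<partial>lborel) < \<infinity>"
  proof (rule nn_integral_finite_if_local_majorant_and_powr_tail[OF p_meas])
    show "f t \<le> (s * P * m * B) * p t" if "t \<ge> 0" for t
    proof -
      have "G t * p t \<le> B * p t"
        using B[OF that] p_nonneg[OF that] by (rule mult_right_mono)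
      moreover have "s * P * m \<ge> 0"
        using s0 P_pos by (simp add: m_def)
      ultimately show ?thesis
        unfolding f_def by (metis mult.assoc mult_left_mono)
    qed
    have "(\<lambda>t. G t * p t) \<in> O[at_top](\<lambda>t. t powr (- \<alpha> + (\<alpha> - 1 - \<epsilon>)))"
      using G_decay p_growth by (rule bigo_mult_powr)
    then show "f \<in> O[at_top](\<lambda>t. t powr (- 1 - \<epsilon>))"
      unfolding f_def by (cases "s * P * m = 0") simp_all
    show "(\<integral>\<^sup>+ t\<in>{0..R}. ennreal (p t) \<partial>lborel) < \<infinity>" for R
      by (rule nn_integral_radial_density_Icc_finite[OF lam_pos Lambda_locfin Lambda_p])
    show "s * P * m * B \<ge> 0"
      using s0 P_pos B[of 0] G_nonneg[of 0] by (simp add: m_def)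
    show "- 1 - \<epsilon> < - 1"
      using eps_pos by simp
  qed
  have "(\<integral>\<^sup>+ t\<in>{0..}. (\<integral>\<^sup>+ h\<in>{0..}.
            ennreal ((1 - exp (- s * P * h * G t)) * q h * p t) \<partial>lborel) \<partial>lborel)
      \<le> (\<integral>\<^sup>+ t\<in>{0..}. ennreal (f t) \<partial>lborel)"
    by (intro nn_integral_mono) (use inner in \<open>simp split: split_indicator\<close>)
  then show "(\<integral>\<^sup>+ t\<in>{0..}. (\<integral>\<^sup>+ h\<in>{0..}.
            ennreal ((1 - exp (- s * P * h * G t)) * q h * p t) \<partial>lborel) \<partial>lborel) < \<infinity>"
    using f_finite by (rule le_less_trans)
qed

end
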